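(* Let $G$ be a connected abelian Lie group with Lie algebra $\mathfrak{g}$, a real vector space of dimension $n$, and exponential map $\exp:\mathfrak{g}\to G$ (the universal covering homomorphism). Let $T$ be the maximal torus of $G$, $\mathfrak{t}=\exp^{-1}(T)$ its Lie algebra, and $\Gamma=\ker\exp$, a lattice in $\mathfrak{t}$; let $v_1,\ldots,v_t$ be a basis of $\Gamma$. Let $v_{t+1},\ldots,v_{n+1}$ be elements of $\mathfrak{g}$. Then the subsemigroup of $G$ generated by $\exp(v_{t+1}),\ldots,\exp(v_{n+1})$ is dense in $G$ if and only if the following two conditions hold: (a) the vectors $v_1,\ldots,v_n$ form a basis of $\mathfrak{g}$ over $\mathbb{R}$; (b) writing $v_{n+1}=\alpha_1v_1+\cdots+\alpha_nv_n$, we have $\alpha_i<0$ for $i=t+1,\ldots,n$, and $1,\alpha_1,\ldots,\alpha_n$ are linearly independent over $\mathbb{Q}$.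
   Context: The maximal torus of a connected abelian Lie group is its unique maximal compact subgroup (a compact connected abelian Lie group). *)

theory Defs
  imports "HOL-Analysis.Analysis"
begin

inductive_set subsemigroup_gen :: "'g::plus set \<Rightarrow> 'g set" for S where
  gen: "x \<in> S \<Longrightarrow> x \<in> subsemigroup_gen S"
| add: "x \<in> subsemigroup_gen S \<Longrightarrow> y \<in> subsemigroup_gen S \<Longrightarrow> x + y \<in> subsemigroup_gen S"

end

(*
  The exponential map is an open continuous surjection, so the semigroup generated by
  exp v_(t+1), ..., exp v_(n+1) is dense in G iff its preimage S + Gamma is dense in the Lie
  algebra, where S is the semigroup generated by v_(t+1), ..., v_(n+1) and Gamma is the
  lattice spanned by v_1, ..., v_t. If (a) or (b) fails, some nonzero linear functional maps
  S + Gamma into [0, oo) or into the integers, so S + Gamma is not dense. Conversely, by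
  Kronecker's theorem the multiples b * alpha_i with b large approximate any prescribed residues
  modulo 1 simultaneously; the points z_1 v_1 + ... + z_n v_n + b v_(n+1) of S + Gamma
  (z_i >= 0 for i > t because alpha_i < 0 and b is large) then come arbitrarily close to any vector.
*)

theory Submission
  imports Defs "HOL-Analysis.Kronecker_Approximation_Theorem"
begin

lemma covering_space_open_image:
  assumes cov: "covering_space UNIV p UNIV" and "open U"
  shows "open (p ` U)"
  unfolding open_subopen [of "p ` U"]
proof
  fix y assume "y \<in> p ` U"
  then obtain x where "x \<in> U" "y = p x"
    by blast
  then obtain T W q where "x \<in> T" "openin (top_of_set UNIV) T" "p x \<in> W"
      "openin (top_of_set UNIV) W" and hom: "homeomorphism T W p q"
    using covering_space_local_homeomorphism [OF cov] by blast
  have "openin (top_of_set T) (T \<inter> U)"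
    using \<open>open U\<close> by (simp add: openin_open_Int)
  then have "openin (top_of_set W) (p ` (T \<inter> U))"
    by (rule homeomorphism_imp_open_map [OF hom])
  then have "open (p ` (T \<inter> U))"
    using \<open>openin (top_of_set UNIV) W\<close> openin_open_trans by auto
  then show "\<exists>V. open V \<and> y \<in> V \<and> V \<subseteq> p ` U"
    using \<open>x \<in> T\<close> \<open>x \<in> U\<close> \<open>y = p x\<close> by blast
qed

lemma dense_iff_dense_vimage:
  fixes p :: "'a::topological_space \<Rightarrow> 'b::topological_space"
  assumes cont: "continuous_on UNIV p" and surj: "surj p"
    and open_map: "\<And>U. open U \<Longrightarrow> open (p ` U)"
  shows "closure B = UNIV \<longleftrightarrow> closure (p -` B) = UNIV"
proof -
  have dense_iff: "closure A = UNIV \<longleftrightarrow> (\<forall>T. open T \<longrightarrow> T \<noteq> {} \<longrightarrow> A \<inter> T \<noteq> {})"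
    for A :: "'c::topological_space set"
    using dense_intersects_open [of euclidean A] by auto
  show ?thesis
    unfolding dense_iff
  proof (intro iffI allI impI)
    fix U :: "'a set" assume dense: "\<forall>T. open T \<longrightarrow> T \<noteq> {} \<longrightarrow> B \<inter> T \<noteq> {}"
      and "open U" "U \<noteq> {}"
    then have "B \<inter> p ` U \<noteq> {}"
      using open_map by blast
    then show "p -` B \<inter> U \<noteq> {}"
      by blast
  next
    fix T :: "'b set" assume dense: "\<forall>U. open U \<longrightarrow> U \<noteq> {} \<longrightarrow> p -` B \<inter> U \<noteq> {}"
      and "open T" "T \<noteq> {}"
    have "open (p -` T)"
      using \<open>open T\<close> cont open_vimage by blast
    moreover have "p -` T \<noteq> {}"
      using \<open>T \<noteq> {}\<close> surj by (simp add: surj_vimage_empty)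
    ultimately have "p -` B \<inter> p -` T \<noteq> {}"
      using dense by blast
    then show "B \<inter> T \<noteq> {}"
      by blast
  qed
qed

lemma subsemigroup_gen_image:
  assumes hom: "\<And>x y. f (x + y) = f x + f y"
  shows "subsemigroup_gen (f ` V) = f ` subsemigroup_gen V"
proof
  show "subsemigroup_gen (f ` V) \<subseteq> f ` subsemigroup_gen V"
  proof
    fix y assume "y \<in> subsemigroup_gen (f ` V)"
    then show "y \<in> f ` subsemigroup_gen V"
    proof induct
      case (gen y)
      then show ?case
        by (auto intro: subsemigroup_gen.gen)
    next
      case (add x y)
      then obtain a b where "a \<in> subsemigroup_gen V" "b \<in> subsemigroup_gen V" "x = f a" "y = f b"
        by auto
      then show ?case
        using hom [of a b] by (metis image_eqI subsemigroup_gen.add)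
    qed
  qed
  show "f ` subsemigroup_gen V \<subseteq> subsemigroup_gen (f ` V)"
  proof clarify
    fix x assume "x \<in> subsemigroup_gen V"
    then show "f x \<in> subsemigroup_gen (f ` V)"
    proof induct
      case (gen x)
      then show ?case
        by (auto intro: subsemigroup_gen.gen)
    next
      case (add x y)
      then show ?case
        using hom [of x y] by (metis subsemigroup_gen.add)
    qed
  qed
qed

lemma subsemigroup_gen_least:
  assumes "V \<subseteq> P" "\<And>x y. x \<in> P \<Longrightarrow> y \<in> P \<Longrightarrow> x + y \<in> P"
  shows "subsemigroup_gen V \<subseteq> P"
proof
  fix x assume "x \<in> subsemigroup_gen V"
  then show "x \<in> P"
    by induct (use assms in auto)
qed

lemma add_nat_multiple_in_subsemigroup_gen:
  fixes w :: "'a::real_vector"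
  assumes "y \<in> subsemigroup_gen V" "w \<in> subsemigroup_gen V"
  shows "y + of_nat m *\<^sub>R w \<in> subsemigroup_gen V"
proof (induction m)
  case (Suc m)
  have "y + of_nat (Suc m) *\<^sub>R w = (y + of_nat m *\<^sub>R w) + w"
    by (simp add: algebra_simps)
  then show ?case
    using Suc assms(2) by (metis subsemigroup_gen.add)
qed (use assms in simp)

lemma add_nat_combination_in_subsemigroup_gen:
  fixes w :: "nat \<Rightarrow> 'a::real_vector"
  assumes "finite F" "y \<in> subsemigroup_gen V" "\<And>i. i \<in> F \<Longrightarrow> w i \<in> subsemigroup_gen V"
  shows "y + (\<Sum>i\<in>F. of_nat (a i) *\<^sub>R w i) \<in> subsemigroup_gen V"
  using assms
proof (induction F rule: finite_induct)
  case (insert i F)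
  have "y + (\<Sum>i\<in>insert i F. of_nat (a i) *\<^sub>R w i)
      = (y + (\<Sum>i\<in>F. of_nat (a i) *\<^sub>R w i)) + of_nat (a i) *\<^sub>R w i"
    using insert.hyps by (simp add: add_ac)
  also have "\<dots> \<in> subsemigroup_gen V"
    using insert by (intro add_nat_multiple_in_subsemigroup_gen) auto
  finally show ?case .
qed simp

definition semigroup_plus_lattice :: "(nat \<Rightarrow> 'a::real_vector) \<Rightarrow> nat \<Rightarrow> nat \<Rightarrow> 'a set" where
  "semigroup_plus_lattice v t n =
     {s + (\<Sum>i=1..t. of_int (k i) *\<^sub>R v i) | s k. s \<in> subsemigroup_gen (v ` {t+1..n+1})}"

lemma vimage_subsemigroup_gen_eq_semigroup_plus_lattice:
  fixes f :: "'a::real_vector \<Rightarrow> 'g::ab_group_add"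
  assumes hom: "\<And>x y. f (x + y) = f x + f y"
    and kernel: "{x. f x = 0} = {(\<Sum>i=1..t. of_int (k i) *\<^sub>R v i) | k :: nat \<Rightarrow> int. True}"
  shows "f -` subsemigroup_gen (f ` v ` {t+1..n+1}) = semigroup_plus_lattice v t n"
proof -
  have f_diff: "f (x - y) = f x - f y" for x y
    using hom [of "x - y" y] by (simp add: algebra_simps)
  have vimage_image: "f -` (f ` S) = {s + \<gamma> | s \<gamma>. s \<in> S \<and> f \<gamma> = 0}" for S
  proof (intro equalityI subsetI)
    fix x assume "x \<in> f -` (f ` S)"
    then obtain s where "s \<in> S" "f x = f s"
      by auto
    then show "x \<in> {s + \<gamma> | s \<gamma>. s \<in> S \<and> f \<gamma> = 0}"
      by (intro CollectI exI [of _ s] exI [of _ "x - s"]) (simp add: f_diff)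
  next
    fix x assume "x \<in> {s + \<gamma> | s \<gamma>. s \<in> S \<and> f \<gamma> = 0}"
    then obtain s \<gamma> where "s \<in> S" "f \<gamma> = 0" "x = s + \<gamma>"
      by blast
    then show "x \<in> f -` (f ` S)"
      by (simp add: hom)
  qed
  have ker: "f \<gamma> = 0 \<longleftrightarrow> (\<exists>k. \<gamma> = (\<Sum>i=1..t. of_int (k i) *\<^sub>R v i))" for \<gamma>
    using kernel by (simp add: set_eq_iff)
  show ?thesis
    unfolding subsemigroup_gen_image [of f, OF hom] vimage_image semigroup_plus_lattice_def ker
    by blast
qed

lemma linear_image_semigroup_plus_lattice_subset:
  fixes g :: "'a::real_vector \<Rightarrow> real"
  assumes lin: "linear g" and "0 \<in> C" and add: "\<And>a b. a \<in> C \<Longrightarrow> b \<in> C \<Longrightarrow> a + b \<in> C"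
    and lattice: "\<And>i k. i \<in> {1..t} \<Longrightarrow> of_int k * g (v i) \<in> C"
    and semigroup: "\<And>j. j \<in> {t+1..n+1} \<Longrightarrow> g (v j) \<in> C"
  shows "g ` semigroup_plus_lattice v t n \<subseteq> C"
proof clarify
  fix x assume "x \<in> semigroup_plus_lattice v t n"
  then obtain s k where x: "x = s + (\<Sum>i=1..t. of_int (k i) *\<^sub>R v i)"
    and s: "s \<in> subsemigroup_gen (v ` {t+1..n+1})"
    unfolding semigroup_plus_lattice_def by blast
  have "subsemigroup_gen (v ` {t+1..n+1}) \<subseteq> g -` C"
  proof (rule subsemigroup_gen_least)
    show "v ` {t+1..n+1} \<subseteq> g -` C"
      using semigroup by blast
    show "a + b \<in> g -` C" if "a \<in> g -` C" "b \<in> g -` C" for a b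
      using that add by (simp add: linear_add [OF lin])
  qed
  with s have "g s \<in> C"
    by blast
  have "(\<Sum>i\<in>I. of_int (k i) * g (v i)) \<in> C" if "I \<subseteq> {1..t}" for I
    using finite_subset [OF that] that
    by (induction I rule: finite_induct) (simp_all add: \<open>0 \<in> C\<close> add lattice)
  then have "g (\<Sum>i=1..t. of_int (k i) *\<^sub>R v i) \<in> C"
    by (simp add: linear_sum [OF lin] linear_scale [OF lin])
  then show "g x \<in> C"
    using \<open>g s \<in> C\<close> add by (simp add: x linear_add [OF lin])
qed

lemma not_dense_if_linear_image_subset_closed:
  fixes g :: "'a::euclidean_space \<Rightarrow> real"
  assumes "linear g" "g x \<noteq> 0" "closed C" "r \<notin> C" "g ` D \<subseteq> C"
  shows "closure D \<noteq> UNIV"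
proof
  assume "closure D = UNIV"
  have "continuous_on UNIV g"
    using \<open>linear g\<close> by (simp add: linear_continuous_on linear_conv_bounded_linear)
  then have "closed (g -` C)"
    using \<open>closed C\<close> closed_vimage by blast
  then have "closure D \<subseteq> g -` C"
    using \<open>g ` D \<subseteq> C\<close> by (simp add: closure_minimal image_subset_iff_subset_vimage)
  then have "g ((r / g x) *\<^sub>R x) \<in> C"
    using \<open>closure D = UNIV\<close> by auto
  then show False
    using \<open>r \<notin> C\<close> \<open>g x \<noteq> 0\<close> by (simp add: linear_scale [OF \<open>linear g\<close>])
qed

lemma dense_semigroup_plus_lattice_nonneg_functional:
  fixes g :: "'a::euclidean_space \<Rightarrow> real"
  assumes "closure (semigroup_plus_lattice v t n) = UNIV" "linear g"
    and "\<And>i. i \<in> {1..t} \<Longrightarrow> g (v i) = 0" "\<And>j. j \<in> {t+1..n+1} \<Longrightarrow> g (v j) \<ge> 0"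
  shows "g x = 0"
proof (rule ccontr)
  assume "g x \<noteq> 0"
  have "g ` semigroup_plus_lattice v t n \<subseteq> {0..}"
    by (rule linear_image_semigroup_plus_lattice_subset) (use assms in auto)
  then show False
    using not_dense_if_linear_image_subset_closed [OF \<open>linear g\<close> \<open>g x \<noteq> 0\<close>, of "{0..}" "-1"] assms(1)
    by simp
qed

lemma dense_semigroup_plus_lattice_integral_functional:
  fixes g :: "'a::euclidean_space \<Rightarrow> real"
  assumes "closure (semigroup_plus_lattice v t n) = UNIV" "linear g"
    and "\<And>i. i \<in> {1..t} \<union> {t+1..n+1} \<Longrightarrow> g (v i) \<in> \<int>"
  shows "g x = 0"
proof (rule ccontr)
  assume "g x \<noteq> 0"
  have "g ` semigroup_plus_lattice v t n \<subseteq> \<int>"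
    by (rule linear_image_semigroup_plus_lattice_subset) (use assms in auto)
  moreover have "1/2 \<notin> (\<int> :: real set)"
  proof
    assume "1/2 \<in> (\<int> :: real set)"
    then obtain m :: int where "1/2 = (of_int m :: real)"
      by (auto elim: Ints_cases)
    then have "1 = 2 * m"
      by linarith
    then show False
      by presburger
  qed
  ultimately show False
    using not_dense_if_linear_image_subset_closed [OF \<open>linear g\<close> \<open>g x \<noteq> 0\<close> closed_Ints] assms(1)
    by blast
qed

lemma dense_semigroup_plus_lattice_span:
  fixes v :: "nat \<Rightarrow> 'a::euclidean_space"
  assumes dense: "closure (semigroup_plus_lattice v t n) = UNIV" and "t \<le> n"
  shows "span (v ` {1..n}) = UNIV"
proof (rule ccontr)
  assume "span (v ` {1..n}) \<noteq> UNIV"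
  then obtain a :: 'a where "a \<noteq> 0" and orth_span: "\<forall>x\<in>span (v ` {1..n}). a \<bullet> x = 0"
    using span_not_UNIV_orthogonal by blast
  have orth: "a \<bullet> v i = 0" if "i \<in> {1..n}" for i
    using orth_span span_base [of "v i"] that by blast
  define \<sigma> :: real where "\<sigma> = (if a \<bullet> v (n+1) \<ge> 0 then 1 else -1)"
  have lin: "linear (\<lambda>x. \<sigma> * (a \<bullet> x))"
    by (auto intro!: linearI simp: inner_add_right algebra_simps)
  have "\<sigma> * (a \<bullet> v i) = 0" if "i \<in> {1..t}" for i
    using that orth \<open>t \<le> n\<close> by simp
  moreover have "\<sigma> * (a \<bullet> v j) \<ge> 0" if "j \<in> {t+1..n+1}" for j
  proof (cases "j = n+1")
    case False
    with that orth show ?thesis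
      by simp
  qed (simp add: \<sigma>_def)
  ultimately have "\<sigma> * (a \<bullet> a) = 0"
    by (rule dense_semigroup_plus_lattice_nonneg_functional [OF dense lin])
  with \<open>a \<noteq> 0\<close> show False
    by (simp add: \<sigma>_def split: if_splits)
qed

lemma spanning_family_card_eq_DIM:
  fixes v :: "'i \<Rightarrow> 'a::euclidean_space"
  assumes "finite I" "card I = DIM('a)" "span (v ` I) = UNIV"
  shows "inj_on v I" "independent (v ` I)"
proof -
  have "DIM('a) \<le> card (v ` I)"
    using span_card_ge_dim [of "v ` I" UNIV] assms by simp
  then have card: "card (v ` I) = card I"
    using card_image_le [OF \<open>finite I\<close>, of v] assms(2) by linarith
  then show "inj_on v I"
    using eq_card_imp_inj_on [OF \<open>finite I\<close>] by blast
  show "independent (v ` I)"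
    using card_le_dim_spanning [of "v ` I" UNIV] assms card by simp
qed

lemma linear_functional_prescribed_on_independent:
  fixes v :: "'i \<Rightarrow> 'a::euclidean_space"
  assumes "inj_on v I" "independent (v ` I)"
  obtains g :: "'a \<Rightarrow> real" where "linear g" "\<And>i. i \<in> I \<Longrightarrow> g (v i) = c i"
proof -
  obtain g :: "'a \<Rightarrow> real" where g: "linear g" "\<And>x. x \<in> v ` I \<Longrightarrow> g x = c (inv_into I v x)"
    using linear_independent_extend [OF assms(2), of "\<lambda>x. c (inv_into I v x)"] by blast
  moreover have "g (v i) = c i" if "i \<in> I" for i
    using g(2) [of "v i"] inv_into_f_f [OF assms(1) that] that by simp
  ultimately show thesis
    using that by blast
qed

lemma span_image_finite_sum:
  fixes v :: "'i \<Rightarrow> 'a::euclidean_space"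
  assumes "inj_on v I" "finite I" "x \<in> span (v ` I)"
  obtains c where "x = (\<Sum>i\<in>I. c i *\<^sub>R v i)"
proof -
  obtain u where "x = (\<Sum>w\<in>v ` I. u w *\<^sub>R w)"
    using assms(2,3) span_finite [of "v ` I"] by auto
  then have "x = (\<Sum>i\<in>I. u (v i) *\<^sub>R v i)"
    by (simp add: sum.reindex [OF assms(1)])
  then show thesis
    by (rule that)
qed

lemma dense_semigroup_plus_lattice_coeff_neg:
  fixes v :: "nat \<Rightarrow> 'a::euclidean_space"
  assumes dense: "closure (semigroup_plus_lattice v t n) = UNIV"
    and "inj_on v {1..n}" "independent (v ` {1..n})"
    and coeffs: "v (n+1) = (\<Sum>i=1..n. \<alpha> i *\<^sub>R v i)" and k: "k \<in> {t+1..n}"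
  shows "\<alpha> k < 0"
proof (rule ccontr)
  assume "\<not> \<alpha> k < 0"
  obtain g :: "'a \<Rightarrow> real" where g: "linear g" "\<And>i. i \<in> {1..n} \<Longrightarrow> g (v i) = of_bool (i = k)"
    using linear_functional_prescribed_on_independent [OF assms(2,3), of "\<lambda>i. of_bool (i = k)"]
    by blast
  have "g (v (n+1)) = (\<Sum>i=1..n. \<alpha> i * of_bool (i = k))"
    unfolding coeffs by (simp add: g linear_sum [OF g(1)] linear_scale [OF g(1)])
  also have "\<dots> = \<alpha> k"
    using k by (simp add: sum.delta)
  finally have last: "g (v (n+1)) \<ge> 0"
    using \<open>\<not> \<alpha> k < 0\<close> by simp
  have "g (v i) = 0" if "i \<in> {1..t}" for i
    using that k g(2) by auto
  moreover have "g (v j) \<ge> 0" if "j \<in> {t+1..n+1}" for j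
    using that last g(2) by (cases "j = n+1") auto
  ultimately have "g (v k) = 0"
    by (rule dense_semigroup_plus_lattice_nonneg_functional [OF dense g(1)])
  then show False
    using k g(2) by simp
qed

lemma common_denominator:
  fixes q :: "'i \<Rightarrow> rat"
  assumes "finite I"
  obtains d :: int where "d > 0" "\<And>i. i \<in> I \<Longrightarrow> of_int d * q i \<in> \<int>"
  using assms
proof (induction I arbitrary: thesis rule: finite_induct)
  case empty
  then show ?case
    using empty.prems [of 1] by simp
next
  case (insert j I)
  obtain d :: int where "d > 0" and d: "\<And>i. i \<in> I \<Longrightarrow> of_int d * q i \<in> \<int>"
    using insert.IH by blast
  obtain a b where ab: "quotient_of (q j) = (a, b)"
    by fastforce
  have "b > 0" "q j = of_int a / of_int b"
    using quotient_of_denom_pos [OF ab] quotient_of_div [OF ab] by auto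
  then have "of_int (d * b) * q j = of_int (d * a)"
    by simp
  moreover have "of_int (d * b) * q i = of_int b * (of_int d * q i)" for i
    by simp
  ultimately have "of_int (d * b) * q i \<in> \<int>" if "i \<in> insert j I" for i
    using that d by (metis Ints_mult Ints_of_int insert_iff)
  then show thesis
    using \<open>d > 0\<close> \<open>b > 0\<close> by (intro insert.prems [of "d * b"]) auto
qed

definition rat_independent_with_one :: "(nat \<Rightarrow> real) \<Rightarrow> nat \<Rightarrow> bool" where
  "rat_independent_with_one \<alpha> n \<longleftrightarrow>
     (\<forall>q :: nat \<Rightarrow> rat. of_rat (q 0) + (\<Sum>i=1..n. of_rat (q i) * \<alpha> i) = 0 \<longrightarrow> (\<forall>i\<in>{0..n}. q i = 0))"

lemma dense_semigroup_plus_lattice_rat_independent: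
  fixes v :: "nat \<Rightarrow> 'a::euclidean_space"
  assumes dense: "closure (semigroup_plus_lattice v t n) = UNIV" and "t \<le> n"
    and "inj_on v {1..n}" "independent (v ` {1..n})"
    and coeffs: "v (n+1) = (\<Sum>i=1..n. \<alpha> i *\<^sub>R v i)"
  shows "rat_independent_with_one \<alpha> n"
  unfolding rat_independent_with_one_def
proof (intro allI impI)
  fix q :: "nat \<Rightarrow> rat"
  assume rel: "of_rat (q 0) + (\<Sum>i=1..n. of_rat (q i) * \<alpha> i) = 0"
  obtain d :: int where "d > 0" and d: "\<And>i. i \<in> {0..n} \<Longrightarrow> of_int d * q i \<in> \<int>"
    using common_denominator [of "{0..n}" q] by blast
  have d_real: "of_int d * of_rat (q i) \<in> (\<int> :: real set)" if "i \<in> {0..n}" for i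
    using d [OF that] by (metis Ints_cases of_rat_mult of_rat_of_int_eq Ints_of_int)
  obtain g :: "'a \<Rightarrow> real" where g: "linear g" "\<And>i. i \<in> {1..n} \<Longrightarrow> g (v i) = of_int d * of_rat (q i)"
    using linear_functional_prescribed_on_independent [OF assms(3,4), of "\<lambda>i. of_int d * of_rat (q i)"]
    by blast
  have "g (v (n+1)) = of_int d * (\<Sum>i=1..n. of_rat (q i) * \<alpha> i)"
    unfolding coeffs by (simp add: g linear_sum [OF g(1)] linear_scale [OF g(1)] sum_distrib_left algebra_simps)
  also have "\<dots> = - (of_int d * of_rat (q 0))"
  proof -
    have "of_int d * of_rat (q 0) + of_int d * (\<Sum>i=1..n. of_rat (q i) * \<alpha> i) = 0"
      using rel by (metis distrib_left mult_zero_right)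
    then show ?thesis
      by linarith
  qed
  finally have "g (v (n+1)) \<in> \<int>"
    using d_real [of 0] by simp
  then have "g (v i) \<in> \<int>" if "i \<in> {1..t} \<union> {t+1..n+1}" for i
    using that \<open>t \<le> n\<close> g(2) d_real by (cases "i = n+1") auto
  then have "g (v i) = 0" for i
    by (rule dense_semigroup_plus_lattice_integral_functional [OF dense g(1)])
  then have "q i = 0" if "i \<in> {1..n}" for i
    using that g(2) \<open>d > 0\<close> by fastforce
  moreover from this have "q 0 = 0"
    using rel by simp
  ultimately show "\<forall>i\<in>{0..n}. q i = 0"
    by (metis atLeastAtMost_iff not_one_le_zero le_0_eq linorder_not_less less_one)
qed

lemma rat_independent_with_one_int_relation:
  assumes indep: "rat_independent_with_one \<alpha> n"
    and rel: "(\<Sum>i\<le>n. of_int (u i) * ((\<lambda>i. \<alpha> (Suc i))(n := 1)) i) = 0" and "i \<le> n"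
  shows "u i = 0"
proof -
  define q :: "nat \<Rightarrow> rat" where "q i = of_int (if i = 0 then u n else u (i - 1))" for i
  have "(\<Sum>i\<le>n. of_int (u i) * ((\<lambda>i. \<alpha> (Suc i))(n := 1)) i)
      = (\<Sum>i<n. of_int (u i) * \<alpha> (Suc i)) + of_int (u n)"
    by (simp add: lessThan_Suc_atMost [symmetric])
  also have "(\<Sum>i<n. of_int (u i) * \<alpha> (Suc i)) = (\<Sum>i=1..n. of_rat (q i) * \<alpha> i)"
    by (simp add: sum.atLeast1_atMost_eq q_def)
  finally have "of_rat (q 0) + (\<Sum>i=1..n. of_rat (q i) * \<alpha> i) = 0"
    using rel by (simp add: q_def add.commute)
  then have "q j = 0" if "j \<le> n" for j
    using indep that unfolding rat_independent_with_one_def by auto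
  from this [of "Suc i"] this [of 0] \<open>i \<le> n\<close> show "u i = 0"
    by (cases "i = n") (auto simp: q_def)
qed

lemma Kronecker_rat_independent_with_one:
  assumes indep: "rat_independent_with_one \<alpha> n" and "\<epsilon> > 0"
  obtains k :: int and m :: "nat \<Rightarrow> int"
    where "\<And>i. i \<in> {1..n} \<Longrightarrow> \<bar>of_int k * \<alpha> i - of_int (m i) - c i\<bar> < \<epsilon>"
proof -
  \<comment> \<open>Kronecker_thm_2 expects the family indexed by {..n} with the constant 1 last.\<close>
  define \<theta> where "\<theta> = (\<lambda>i. \<alpha> (Suc i))(n := 1)"
  note rel_trivial = rat_independent_with_one_int_relation [OF indep, folded \<theta>_def]
  interpret M: Modules.module "\<lambda>r. (*) (real_of_int r)"
    by (simp add: Modules.module.intro distrib_left mult.commute)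
  have inj: "inj_on \<theta> {..n}"
  proof (rule inj_onI, rule ccontr)
    fix i j assume ij: "i \<in> {..n}" "j \<in> {..n}" "\<theta> i = \<theta> j" "i \<noteq> j"
    define u :: "nat \<Rightarrow> int" where "u k = of_bool (k = i) - of_bool (k = j)" for k
    have "(\<Sum>k\<le>n. of_int (u k) * \<theta> k) = \<theta> i - \<theta> j"
      using ij by (simp add: u_def left_diff_distrib sum_subtractf sum.delta)
    then have "u i = 0"
      using ij by (intro rel_trivial) auto
    with ij show False
      by (simp add: u_def)
  qed
  have "M.independent (\<theta> ` {..n})"
  proof
    assume "M.dependent (\<theta> ` {..n})"
    then obtain u where u: "\<exists>x\<in>\<theta> ` {..n}. u x \<noteq> 0" "(\<Sum>x\<in>\<theta> ` {..n}. of_int (u x) * x) = 0"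
      using M.dependent_finite by auto
    have "(\<Sum>i\<le>n. of_int (u (\<theta> i)) * \<theta> i) = 0"
      using u(2) by (simp add: sum.reindex [OF inj])
    then have "u (\<theta> i) = 0" if "i \<le> n" for i
      using that by (rule rel_trivial)
    with u(1) show False
      by auto
  qed
  moreover have "\<theta> n = 1"
    by (simp add: \<theta>_def)
  ultimately obtain k m where km: "\<And>i. i < n \<Longrightarrow> \<bar>of_int k * \<theta> i - of_int (m i) - c (Suc i)\<bar> < \<epsilon>"
    using Kronecker_thm_2 [of \<theta> n \<epsilon> "\<lambda>i. c (Suc i)"] inj \<open>\<epsilon> > 0\<close> by blast
  have "\<bar>of_int k * \<alpha> i - of_int (m (i - 1)) - c i\<bar> < \<epsilon>" if "i \<in> {1..n}" for i
  proof -
    have "i - 1 < n" "Suc (i - 1) = i"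
      using that by auto
    then show ?thesis
      using km [of "i - 1"] by (simp add: \<theta>_def)
  qed
  then show thesis
    by (rule that)
qed

lemma Kronecker_rat_independent_with_one_nat:
  assumes indep: "rat_independent_with_one \<alpha> n" and "\<epsilon> > 0"
  obtains b :: nat and m :: "nat \<Rightarrow> int"
    where "b \<ge> B" "\<And>i. i \<in> {1..n} \<Longrightarrow> \<bar>real b * \<alpha> i - of_int (m i) - c i\<bar> < \<epsilon>"
proof -
  have "\<epsilon>/2 > 0"
    using \<open>\<epsilon> > 0\<close> by simp
  then obtain k m where km: "\<And>i. i \<in> {1..n} \<Longrightarrow> \<bar>of_int k * \<alpha> i - of_int (m i) - c i\<bar> < \<epsilon>/2"
    using Kronecker_rat_independent_with_one [OF indep, where c = c] by blast
  \<comment> \<open>Shift k by j times a Dirichlet denominator q: this makes it large while moving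
      each approximation by at most j/N.\<close>
  define j where "j = nat \<bar>k\<bar> + B"
  obtain N :: nat where N: "real j * 2 / \<epsilon> < N"
    using reals_Archimedean2 by blast
  moreover have "real j * 2 / \<epsilon> \<ge> 0"
    using \<open>\<epsilon> > 0\<close> by simp
  ultimately have "N > 0"
    by linarith
  have jN: "real j * (1 / N) \<le> \<epsilon>/2"
    using N \<open>N > 0\<close> \<open>\<epsilon> > 0\<close> by (simp add: field_simps)
  obtain q p where "0 < q" and qp: "\<And>i. i < n \<Longrightarrow> \<bar>of_int q * \<alpha> (Suc i) - of_int (p i)\<bar> < 1/N"
    using Dirichlet_approx_simult [OF \<open>N > 0\<close>, of n "\<lambda>i. \<alpha> (Suc i)"] by blast
  have "int j * q \<ge> int j"
    using \<open>0 < q\<close> by (simp add: mult_le_cancel_left1)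
  then have large: "k + int j * q \<ge> int B"
    unfolding j_def by linarith
  define b where "b = nat (k + int j * q)"
  have b: "real b = of_int k + real j * of_int q"
    using large by (simp add: b_def)
  have "\<bar>real b * \<alpha> i - of_int (m i + int j * p (i - 1)) - c i\<bar> < \<epsilon>" if i: "i \<in> {1..n}" for i
  proof -
    have "i - 1 < n" "Suc (i - 1) = i"
      using i by auto
    then have "\<bar>of_int q * \<alpha> i - of_int (p (i - 1))\<bar> < 1/N"
      using qp [of "i - 1"] by simp
    then have shift: "real j * \<bar>of_int q * \<alpha> i - of_int (p (i - 1))\<bar> \<le> real j * (1/N)"
      by (intro mult_left_mono) auto
    have "real b * \<alpha> i - of_int (m i + int j * p (i - 1)) - c i
        = (of_int k * \<alpha> i - of_int (m i) - c i) + real j * (of_int q * \<alpha> i - of_int (p (i - 1)))"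
      by (simp add: b algebra_simps)
    also have "\<bar>\<dots>\<bar> \<le> \<bar>of_int k * \<alpha> i - of_int (m i) - c i\<bar>
        + real j * \<bar>of_int q * \<alpha> i - of_int (p (i - 1))\<bar>"
      using abs_triangle_ineq [of "of_int k * \<alpha> i - of_int (m i) - c i"
          "real j * (of_int q * \<alpha> i - of_int (p (i - 1)))"] by (simp only: abs_mult abs_of_nat)
    also have "\<dots> < \<epsilon>"
      using km [OF i] jN shift by linarith
    finally show ?thesis .
  qed
  moreover have "b \<ge> B"
    using large by (simp add: b_def)
  ultimately show thesis
    using that [of b "\<lambda>i. m i + int j * p (i - 1)"] by blast
qed

lemma coordinates_approximation:
  assumes indep: "rat_independent_with_one \<alpha> n" and neg: "\<And>i. i \<in> {t+1..n} \<Longrightarrow> \<alpha> i < 0"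
    and "\<epsilon> > 0"
  obtains b :: nat and z :: "nat \<Rightarrow> int"
    where "b \<ge> 1" "\<And>i. i \<in> {t+1..n} \<Longrightarrow> z i \<ge> 0"
      "\<And>i. i \<in> {1..n} \<Longrightarrow> \<bar>of_int (z i) + real b * \<alpha> i - c i\<bar> < \<epsilon>"
proof -
  define \<delta> where "\<delta> = min \<epsilon> (1/2)"
  define N0 where "N0 = nat \<lceil>\<Sum>i\<in>{t+1..n}. \<bar>c i\<bar> / (- \<alpha> i)\<rceil> + 1"
  have "\<delta> > 0"
    using \<open>\<epsilon> > 0\<close> by (simp add: \<delta>_def)
  then obtain b m where "b \<ge> N0" and bm: "\<And>i. i \<in> {1..n} \<Longrightarrow> \<bar>real b * \<alpha> i - of_int (m i) - c i\<bar> < \<delta>"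
    using Kronecker_rat_independent_with_one_nat [OF indep, where c = c and B = N0] by blast
  have approx: "\<bar>of_int (- m i) + real b * \<alpha> i - c i\<bar> < \<delta>" if "i \<in> {1..n}" for i
    using bm [OF that] by simp
  have "b \<ge> 1"
    using \<open>b \<ge> N0\<close> by (simp add: N0_def)
  moreover have "- m i \<ge> 0" if i: "i \<in> {t+1..n}" for i
  proof -
    \<comment> \<open>b is large enough that b * (- \<alpha> i) dominates \<bar>c i\<bar>.\<close>
    have "\<bar>c i\<bar> / (- \<alpha> i) \<le> (\<Sum>i\<in>{t+1..n}. \<bar>c i\<bar> / (- \<alpha> i))"
      using i neg by (intro member_le_sum) (auto intro!: divide_nonneg_neg)
    also have "\<dots> \<le> real b"
      using \<open>b \<ge> N0\<close> unfolding N0_def by linarith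
    finally have "\<bar>c i\<bar> \<le> real b * (- \<alpha> i)"
      using neg [OF i] by (simp add: field_simps)
    moreover have "\<bar>of_int (- m i) + real b * \<alpha> i - c i\<bar> < 1/2"
      using approx [of i] i by (simp add: \<delta>_def)
    ultimately have "(of_int (- m i) :: real) > - 1/2"
      using abs_ge_minus_self [of "c i"] unfolding abs_less_iff by linarith
    then show ?thesis
      by linarith
  qed
  moreover have "\<bar>of_int (- m i) + real b * \<alpha> i - c i\<bar> < \<epsilon>" if "i \<in> {1..n}" for i
    using approx [OF that] by (simp add: \<delta>_def)
  ultimately show thesis
    by (rule that)
qed

lemma semigroup_plus_lattice_memI:
  fixes v :: "nat \<Rightarrow> 'a::real_vector"
  assumes "t \<le> n" "b \<ge> 1" and nonneg: "\<And>i. i \<in> {t+1..n} \<Longrightarrow> z i \<ge> 0"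
  shows "(\<Sum>i=1..n. of_int (z i) *\<^sub>R v i) + of_nat b *\<^sub>R v (n+1) \<in> semigroup_plus_lattice v t n"
proof -
  let ?S = "subsemigroup_gen (v ` {t+1..n+1})"
  define s where "s = of_nat b *\<^sub>R v (n+1) + (\<Sum>i\<in>{t+1..n}. of_int (z i) *\<^sub>R v i)"
  have gen: "v j \<in> ?S" if "j \<in> {t+1..n+1}" for j
    using that by (simp add: subsemigroup_gen.gen)
  have "v (n+1) + of_nat (b - 1) *\<^sub>R v (n+1) \<in> ?S"
    using gen [of "n+1"] \<open>t \<le> n\<close> by (intro add_nat_multiple_in_subsemigroup_gen) auto
  moreover have "v (n+1) + of_nat (b - 1) *\<^sub>R v (n+1) = of_nat b *\<^sub>R v (n+1)"
    using \<open>b \<ge> 1\<close> by (simp add: algebra_simps of_nat_diff)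
  ultimately have "of_nat b *\<^sub>R v (n+1) + (\<Sum>i\<in>{t+1..n}. of_nat (nat (z i)) *\<^sub>R v i) \<in> ?S"
    using gen by (intro add_nat_combination_in_subsemigroup_gen) auto
  moreover have "(\<Sum>i\<in>{t+1..n}. of_nat (nat (z i)) *\<^sub>R v i) = (\<Sum>i\<in>{t+1..n}. of_int (z i) *\<^sub>R v i)"
    using nonneg by (intro sum.cong) auto
  ultimately have "s \<in> ?S"
    by (simp add: s_def)
  have "{1..n} = {1..t} \<union> {t+1..n}"
    using \<open>t \<le> n\<close> by auto
  then have "(\<Sum>i=1..n. of_int (z i) *\<^sub>R v i) + of_nat b *\<^sub>R v (n+1) = s + (\<Sum>i=1..t. of_int (z i) *\<^sub>R v i)"
    by (simp add: s_def sum.union_disjoint add_ac)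
  with \<open>s \<in> ?S\<close> show ?thesis
    unfolding semigroup_plus_lattice_def by blast
qed

lemma semigroup_plus_lattice_dense:
  fixes v :: "nat \<Rightarrow> 'a::euclidean_space"
  assumes "t \<le> n" "inj_on v {1..n}" "span (v ` {1..n}) = UNIV"
    and coeffs: "v (n+1) = (\<Sum>i=1..n. \<alpha> i *\<^sub>R v i)"
    and neg: "\<And>i. i \<in> {t+1..n} \<Longrightarrow> \<alpha> i < 0" and indep: "rat_independent_with_one \<alpha> n"
  shows "closure (semigroup_plus_lattice v t n) = UNIV"
proof -
  have "\<exists>y\<in>semigroup_plus_lattice v t n. dist y x < \<epsilon>" if "\<epsilon> > 0" for x and \<epsilon> :: real
  proof -
    obtain c where c: "x = (\<Sum>i=1..n. c i *\<^sub>R v i)"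
      using span_image_finite_sum [OF assms(2), of x] assms(3) by auto
    define M where "M = (\<Sum>i=1..n. norm (v i)) + 1"
    have "M > 0"
      unfolding M_def using sum_nonneg [of "{1..n}" "\<lambda>i. norm (v i)"] by simp
    with \<open>\<epsilon> > 0\<close> obtain b z where "b \<ge> 1" "\<And>i. i \<in> {t+1..n} \<Longrightarrow> z i \<ge> 0"
      and approx: "\<And>i. i \<in> {1..n} \<Longrightarrow> \<bar>of_int (z i) + real b * \<alpha> i - c i\<bar> < \<epsilon> / M"
      using coordinates_approximation [OF indep neg, where c = c and \<epsilon> = "\<epsilon> / M"] by auto
    define y where "y = (\<Sum>i=1..n. of_int (z i) *\<^sub>R v i) + of_nat b *\<^sub>R v (n+1)"
    have "y \<in> semigroup_plus_lattice v t n"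
      unfolding y_def by (rule semigroup_plus_lattice_memI) fact+
    have "y - x = (\<Sum>i=1..n. (of_int (z i) + real b * \<alpha> i - c i) *\<^sub>R v i)"
      unfolding y_def c coeffs by (simp add: scaleR_sum_right scaleR_add_left scaleR_diff_left
          sum.distrib sum_subtractf)
    then have "norm (y - x) \<le> (\<Sum>i=1..n. \<bar>of_int (z i) + real b * \<alpha> i - c i\<bar> * norm (v i))"
      using norm_sum [of "\<lambda>i. (of_int (z i) + real b * \<alpha> i - c i) *\<^sub>R v i" "{1..n}"] by simp
    also have "\<dots> \<le> (\<Sum>i=1..n. \<epsilon> / M * norm (v i))"
      using approx by (intro sum_mono mult_right_mono) (auto intro: less_imp_le)
    also have "\<dots> = \<epsilon> / M * (M - 1)"
      by (simp add: M_def sum_distrib_left)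
    also have "\<dots> < \<epsilon>"
      using \<open>M > 0\<close> \<open>\<epsilon> > 0\<close> by (simp add: field_simps)
    finally show ?thesis
      using \<open>y \<in> semigroup_plus_lattice v t n\<close> by (auto simp: dist_norm)
  qed
  then show ?thesis
    by (auto simp: closure_approachable)
qed

lemma dense_semigroup_plus_lattice_iff:
  fixes v :: "nat \<Rightarrow> 'a::euclidean_space"
  assumes n: "n = DIM('a)" and "t \<le> n"
  shows "closure (semigroup_plus_lattice v t n) = UNIV \<longleftrightarrow>
    (inj_on v {1..n} \<and> independent (v ` {1..n}) \<and> span (v ` {1..n}) = UNIV) \<and>
    (\<exists>\<alpha>. v (n+1) = (\<Sum>i=1..n. \<alpha> i *\<^sub>R v i) \<and> (\<forall>i\<in>{t+1..n}. \<alpha> i < 0) \<and>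
         rat_independent_with_one \<alpha> n)" (is "_ \<longleftrightarrow> ?conditions")
proof
  assume dense: "closure (semigroup_plus_lattice v t n) = UNIV"
  then have span: "span (v ` {1..n}) = UNIV"
    using dense_semigroup_plus_lattice_span \<open>t \<le> n\<close> by blast
  then have basis: "inj_on v {1..n}" "independent (v ` {1..n})"
    using spanning_family_card_eq_DIM [of "{1..n}" v] n by auto
  then obtain \<alpha> where coeffs: "v (n+1) = (\<Sum>i=1..n. \<alpha> i *\<^sub>R v i)"
    using span_image_finite_sum [of v "{1..n}" "v (n+1)"] span by auto
  show ?conditions
    using basis span coeffs dense_semigroup_plus_lattice_coeff_neg [OF dense basis coeffs]
      dense_semigroup_plus_lattice_rat_independent [OF dense \<open>t \<le> n\<close> basis coeffs]
    by blast
qed (use semigroup_plus_lattice_dense \<open>t \<le> n\<close> in blast)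

theorem corollary4p7:
  fixes expG :: "'a::euclidean_space \<Rightarrow> 'g::{topological_ab_group_add, t2_space}"
    and v :: "nat \<Rightarrow> 'a" and t n :: nat
  assumes n_def: "n = DIM('a)"
    and conn: "connected (UNIV :: 'g set)"
    and hom: "\<And>x y. expG (x + y) = expG x + expG y"
    and cover: "covering_space UNIV expG UNIV"
    and t_le: "t \<le> n"
    and Gamma_span: "{x. expG x = 0} = {(\<Sum>i=1..t. of_int (k i) *\<^sub>R v i) | k :: nat \<Rightarrow> int. True}"
    and Gamma_indep: "\<And>k :: nat \<Rightarrow> int. (\<Sum>i=1..t. of_int (k i) *\<^sub>R v i) = 0 \<Longrightarrow> \<forall>i\<in>{1..t}. k i = 0"
  shows "closure (subsemigroup_gen (expG ` v ` {t+1..n+1})) = UNIV \<longleftrightarrow>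
           ((inj_on v {1..n} \<and> independent (v ` {1..n}) \<and> span (v ` {1..n}) = UNIV) \<and>
            (\<exists>\<alpha> :: nat \<Rightarrow> real.
               v (n+1) = (\<Sum>i=1..n. \<alpha> i *\<^sub>R v i) \<and>
               (\<forall>i\<in>{t+1..n}. \<alpha> i < 0) \<and>
               (\<forall>q :: nat \<Rightarrow> rat. of_rat (q 0) + (\<Sum>i=1..n. of_rat (q i) * \<alpha> i) = 0
                   \<longrightarrow> (\<forall>i\<in>{0..n}. q i = 0))))"
proof -
  have "closure (subsemigroup_gen (expG ` v ` {t+1..n+1})) = UNIV \<longleftrightarrow>
      closure (expG -` subsemigroup_gen (expG ` v ` {t+1..n+1})) = UNIV"
    using covering_space_imp_continuous [OF cover] covering_space_imp_surjective [OF cover]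
      covering_space_open_image [OF cover] by (intro dense_iff_dense_vimage) auto
  also have "\<dots> \<longleftrightarrow> closure (semigroup_plus_lattice v t n) = UNIV"
    unfolding vimage_subsemigroup_gen_eq_semigroup_plus_lattice [OF hom Gamma_span] ..
  finally show ?thesis
    by (simp add: dense_semigroup_plus_lattice_iff [OF n_def t_le] rat_independent_with_one_def)
qed

end
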